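(* Let $k\ge 1$, let $\epsilon>0$, let $(\varphi_0(t))_{t\in\mathbb{N}_{\ge0}}$ be a real sequence, and let $\alpha_1,\dots,\alpha_k:\mathbb{R}\to\mathbb{R}$ be continuous, strictly increasing functions with $\alpha_j(0)=0$ and $\alpha_j(r)\le r$ for all $r\ge0$. Define recursively, for $j\in\{1,\dots,k\}$ and $t\in\mathbb{N}_{\ge0}$, $$\varphi_j(t):=\varphi_{j-1}(t+1)-\varphi_{j-1}(t)+\alpha_j(\varphi_{j-1}(t)).$$ Assume $\varphi_j(0)>0$ for all $j\in\{0,\dots,k-1\}$ and $\varphi_k(t)\ge\epsilon$ for all $t\in\mathbb{N}_{\ge0}$. Then $\varphi_j(t)>0$ for all $j\in\{0,\dots,k-1\}$ and all $t\in\mathbb{N}_{\ge0}$; in particular $\varphi_0(t)>0$ for all $t$.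
   Context: In the paper this is applied with $\varphi_0(t)=a_{i,t}$, an auxiliary variable generated by an auxiliary system of relative degree $k=m+1-i$, to guarantee that $a_{i,t}$ stays positive; the sets $\mathcal{B}_{j}=\{\varphi_j>0\}$, $j=0,\dots,k-1$, are then forward invariant. *)

theory Defs
  imports Complex_Main
begin

fun phi_seq :: "(nat \<Rightarrow> real \<Rightarrow> real) \<Rightarrow> (nat \<Rightarrow> real) \<Rightarrow> nat \<Rightarrow> nat \<Rightarrow> real" where
  "phi_seq alpha phi0 0 t = phi0 t"
| "phi_seq alpha phi0 (Suc j) t =
     phi_seq alpha phi0 j (Suc t) - phi_seq alpha phi0 j t + alpha (Suc j) (phi_seq alpha phi0 j t)"

end

theory Submission
  imports Defs
begin

text \<open>Rearranging the recurrence gives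
  \<open>\<phi>\<^sub>j(t+1) = \<phi>\<^sub>j\<^sub>+\<^sub>1(t) + (\<phi>\<^sub>j(t) - \<alpha>\<^sub>j\<^sub>+\<^sub>1(\<phi>\<^sub>j(t)))\<close>, and the bracket is
  nonnegative as soon as \<open>\<phi>\<^sub>j(t) > 0\<close> because \<open>\<alpha>(r) \<le> r\<close>. So positivity of
  \<open>\<phi>\<^sub>j\<^sub>+\<^sub>1\<close> and \<open>\<phi>\<^sub>j\<close> at time \<open>t\<close> propagates to \<open>\<phi>\<^sub>j\<close> at time \<open>t+1\<close>; induction on
  \<open>t\<close>, with \<open>\<phi>\<^sub>k \<ge> \<epsilon> > 0\<close> closing the top level, does the rest.\<close>

lemma phi_seq_Suc_time:
  "phi_seq alpha phi0 j (Suc t) =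
     phi_seq alpha phi0 (Suc j) t
     + (phi_seq alpha phi0 j t - alpha (Suc j) (phi_seq alpha phi0 j t))"
  by simp

lemma phi_seq_Suc_time_pos:
  assumes "alpha (Suc j) (phi_seq alpha phi0 j t) \<le> phi_seq alpha phi0 j t"
    and "phi_seq alpha phi0 (Suc j) t > 0"
  shows "phi_seq alpha phi0 j (Suc t) > 0"
  unfolding phi_seq_Suc_time using assms by linarith

lemma phi_seq_pos:
  assumes alpha_le: "\<And>j r. j \<in> {1..k} \<Longrightarrow> r > 0 \<Longrightarrow> alpha j r \<le> r"
    and init_pos: "\<And>j. j < k \<Longrightarrow> phi_seq alpha phi0 j 0 > 0"
    and top_pos: "\<And>t. phi_seq alpha phi0 k t > 0"
  shows "\<forall>j<k. phi_seq alpha phi0 j t > 0"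
proof (induction t)
  case 0
  then show ?case using init_pos by blast
next
  case (Suc t)
  show ?case
  proof (intro allI impI)
    fix j assume "j < k"
    have next_pos: "phi_seq alpha phi0 (Suc j) t > 0"
      using Suc.IH top_pos \<open>j < k\<close> by (metis Suc_lessI)
    have "alpha (Suc j) (phi_seq alpha phi0 j t) \<le> phi_seq alpha phi0 j t"
      using alpha_le Suc.IH \<open>j < k\<close> by simp
    then show "phi_seq alpha phi0 j (Suc t) > 0"
      using next_pos by (rule phi_seq_Suc_time_pos)
  qed
qed

theorem mainTheorem2:
  fixes k :: nat and eps :: real and phi0 :: "nat \<Rightarrow> real"
    and alpha :: "nat \<Rightarrow> real \<Rightarrow> real"
  assumes "k \<ge> 1" and "eps > 0"
    and "\<And>j. j \<in> {1..k} \<Longrightarrow> continuous_on UNIV (alpha j)"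
    and "\<And>j. j \<in> {1..k} \<Longrightarrow> strict_mono (alpha j)"
    and "\<And>j. j \<in> {1..k} \<Longrightarrow> alpha j 0 = 0"
    and "\<And>j r. j \<in> {1..k} \<Longrightarrow> r \<ge> 0 \<Longrightarrow> alpha j r \<le> r"
    and "\<And>j. j < k \<Longrightarrow> phi_seq alpha phi0 j 0 > 0"
    and "\<And>t. phi_seq alpha phi0 k t \<ge> eps"
  shows "\<forall>j<k. \<forall>t. phi_seq alpha phi0 j t > 0"
proof -
  have "phi_seq alpha phi0 k t > 0" for t
    using \<open>eps > 0\<close> assms(8)[of t] by linarith
  with phi_seq_pos[of k alpha phi0] assms(6,7) show ?thesis
    by auto
qed

end
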